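(* Let $d\ge2$, $H\le\Sigma_d$, and $x\in A^\omega$. For the action of $V_d(H)$ on $A^\omega$, the germ group $G_x$ is isomorphic to $H_x$ if $x$ is not eventually periodic, and is isomorphic to a semidirect product $H_x\rtimes\mathbb Z$ if $x$ is eventually periodic.
   Context: $A=\{a_1,\dots,a_d\}$; $A^*$, $A^\omega$ are the finite and infinite words, $A^\omega$ with ultrametric $d(x,y)=e^{1-n}$, $n$ the first index where $x,y$ differ; balls are the sets $wA^\omega$, $w\in A^*$. $\Sigma_d$ acts letterwise on $A^\omega$. $V_d(H)$ is the group of homeomorphisms $g$ of $A^\omega$ such that every point lies in a ball $w_1A^\omega$ on which $g$ has the form $w_1y\mapsto w_2\sigma(y)$ for some $w_2\in A^*$, $\sigma\in H$. For a group $\Gamma$ acting on a space and a point $x$, $\Gamma_x$ is the stabilizer of $x$, $N_x\trianglelefteq\Gamma_x$ the subgroup of elements that are the identity on some open neighborhood of $x$, and the *germ group* is $G_x=\Gamma_x/N_x$. For $a\in A$, $H_a=\{\sigma\in H:\sigma(a)=a\}$; for $x=x_1x_2\dots$, the *eventual isotropy group* is $H_x=\bigcap\{H_a: a=x_i\text{ for infinitely many }i\}$. $x$ is *eventually periodic* if $x=u\bar v$ with $u,v\in A^*$, $v$ non-empty, $\bar v=vvv\cdots$. *)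

theory Defs
  imports "HOL-Algebra.Algebra"
begin

text \<open>Alphabet A = {1..d}; infinite words are sequences nat => nat with values in {1..d};
finite words are lists over {1..d}.\<close>

definition inf_words :: "nat \<Rightarrow> (nat \<Rightarrow> nat) set" where
  "inf_words d = {x. \<forall>i. x i \<in> {1..d}}"

definition fin_words :: "nat \<Rightarrow> nat list set" where
  "fin_words d = {w. set w \<subseteq> {1..d}}"

definition conc :: "nat list \<Rightarrow> (nat \<Rightarrow> nat) \<Rightarrow> (nat \<Rightarrow> nat)" where
  "conc w y = (\<lambda>i. if i < length w then w ! i else y (i - length w))"

definition word_ball :: "nat \<Rightarrow> nat list \<Rightarrow> (nat \<Rightarrow> nat) set" where
  "word_ball d w = {z \<in> inf_words d. \<forall>i < length w. z i = w ! i}"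

definition per_word :: "nat list \<Rightarrow> (nat \<Rightarrow> nat)" where
  "per_word v = (\<lambda>i. v ! (i mod length v))"

definition eventually_periodic :: "nat \<Rightarrow> (nat \<Rightarrow> nat) \<Rightarrow> bool" where
  "eventually_periodic d x \<longleftrightarrow>
     (\<exists>u v. u \<in> fin_words d \<and> v \<in> fin_words d \<and> v \<noteq> [] \<and> x = conc u (per_word v))"

text \<open>Continuity on A^omega w.r.t. the ultrametric d(x,y) = e^(1-n):
 for every y and every radius (prefix length n) there is a radius (prefix length m).\<close>
definition cont_words :: "nat \<Rightarrow> ((nat \<Rightarrow> nat) \<Rightarrow> (nat \<Rightarrow> nat)) \<Rightarrow> bool" where
  "cont_words d g \<longleftrightarrow> (\<forall>y \<in> inf_words d. \<forall>n. \<exists>m. \<forall>z \<in> inf_words d.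
      (\<forall>i < m. z i = y i) \<longrightarrow> (\<forall>i < n. g z i = g y i))"

definition homeo_words :: "nat \<Rightarrow> ((nat \<Rightarrow> nat) \<Rightarrow> (nat \<Rightarrow> nat)) \<Rightarrow> bool" where
  "homeo_words d g \<longleftrightarrow> g \<in> Bij (inf_words d) \<and> cont_words d g
     \<and> cont_words d (inv_into (inf_words d) g)"

definition locally_prefix_replacing ::
  "nat \<Rightarrow> (nat \<Rightarrow> nat) set \<Rightarrow> ((nat \<Rightarrow> nat) \<Rightarrow> (nat \<Rightarrow> nat)) \<Rightarrow> bool" where
  "locally_prefix_replacing d H g \<longleftrightarrow>
     (\<forall>y \<in> inf_words d. \<exists>w1 w2 \<sigma>. w1 \<in> fin_words d \<and> w2 \<in> fin_words d \<and> \<sigma> \<in> H \<and>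
        y \<in> word_ball d w1 \<and>
        (\<forall>z \<in> word_ball d w1. g z = conc w2 (\<sigma> \<circ> (\<lambda>i. z (i + length w1)))))"

definition V_carrier :: "nat \<Rightarrow> (nat \<Rightarrow> nat) set \<Rightarrow> ((nat \<Rightarrow> nat) \<Rightarrow> (nat \<Rightarrow> nat)) set" where
  "V_carrier d H = {g. homeo_words d g \<and> locally_prefix_replacing d H g}"

definition V_group :: "nat \<Rightarrow> (nat \<Rightarrow> nat) set \<Rightarrow> ((nat \<Rightarrow> nat) \<Rightarrow> (nat \<Rightarrow> nat)) monoid" where
  "V_group d H = (BijGroup (inf_words d)) \<lparr> carrier := V_carrier d H \<rparr>"

definition stab_group :: "nat \<Rightarrow> (nat \<Rightarrow> nat) set \<Rightarrow> (nat \<Rightarrow> nat) \<Rightarrow>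
    ((nat \<Rightarrow> nat) \<Rightarrow> (nat \<Rightarrow> nat)) monoid" where
  "stab_group d H x = (V_group d H) \<lparr> carrier := {g \<in> V_carrier d H. g x = x} \<rparr>"

definition open_words :: "nat \<Rightarrow> (nat \<Rightarrow> nat) set \<Rightarrow> bool" where
  "open_words d U \<longleftrightarrow> U \<subseteq> inf_words d \<and>
     (\<forall>y \<in> U. \<exists>n. \<forall>z \<in> inf_words d. (\<forall>i < n. z i = y i) \<longrightarrow> z \<in> U)"

definition germ_trivial :: "nat \<Rightarrow> (nat \<Rightarrow> nat) set \<Rightarrow> (nat \<Rightarrow> nat) \<Rightarrow>
    ((nat \<Rightarrow> nat) \<Rightarrow> (nat \<Rightarrow> nat)) set" where
  "germ_trivial d H x = {g \<in> carrier (stab_group d H x).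
     \<exists>U. open_words d U \<and> x \<in> U \<and> (\<forall>y \<in> U. g y = y)}"

definition germ_group :: "nat \<Rightarrow> (nat \<Rightarrow> nat) set \<Rightarrow> (nat \<Rightarrow> nat) \<Rightarrow>
    ((nat \<Rightarrow> nat) \<Rightarrow> (nat \<Rightarrow> nat)) set monoid" where
  "germ_group d H x = stab_group d H x Mod germ_trivial d H x"

definition eventual_isotropy :: "nat \<Rightarrow> (nat \<Rightarrow> nat) set \<Rightarrow> (nat \<Rightarrow> nat) \<Rightarrow> (nat \<Rightarrow> nat) set" where
  "eventual_isotropy d H x = {\<sigma> \<in> H. \<forall>a. infinite {i. x i = a} \<longrightarrow> \<sigma> a = a}"

definition eventual_isotropy_group :: "nat \<Rightarrow> (nat \<Rightarrow> nat) set \<Rightarrow> (nat \<Rightarrow> nat) \<Rightarrow>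
    (nat \<Rightarrow> nat) monoid" where
  "eventual_isotropy_group d H x = (sym_group d) \<lparr> carrier := eventual_isotropy d H x \<rparr>"

definition semidirect_product :: "('a, 'c) monoid_scheme \<Rightarrow> ('b, 'e) monoid_scheme \<Rightarrow>
    ('b \<Rightarrow> 'a \<Rightarrow> 'a) \<Rightarrow> ('a \<times> 'b) monoid" where
  "semidirect_product N K \<phi> =
     \<lparr> carrier = carrier N \<times> carrier K,
       monoid.mult = (\<lambda>(a, k) (b, l). (a \<otimes>\<^bsub>N\<^esub> \<phi> k b, k \<otimes>\<^bsub>K\<^esub> l)),
       one = (\<one>\<^bsub>N\<^esub>, \<one>\<^bsub>K\<^esub>) \<rparr>"

end

theory Submission
  imports Defs
begin

text \<open>
  On a ball around x, an element g of the stabiliser of x has the form w1 y \<mapsto> w2 \<sigma>(y).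
  For d \<ge> 2 the shift |w1| - |w2| and the permutation \<sigma> do not depend on the ball, and
  g \<mapsto> (|w1| - |w2|, \<sigma>) is a homomorphism into \<int> \<times> \<Sigma>_d with kernel N_x; so G_x is isomorphic
  to its image I. As g fixes x, x(|w2| + k) = \<sigma>(x(|w1| + k)) for all k: a nonzero shift makes x
  eventually periodic, and shift 0 forces \<sigma> to fix every letter recurring in x. Conversely each
  \<sigma> \<in> H_x is realised with shift 0 by acting with \<sigma> beyond the last non-recurring letter, and
  for x = u v v v \<dots> two prefix exchanges realise the shift |v|. Hence the elements of I with
  shift 0 form a copy of H_x, and I is either that copy or an extension of a nontrivial subgroup
  of \<int> by it, which splits as H_x \<rtimes> \<int>.
\<close>

section \<open>Extensions of subgroups of the integers\<close>

lemma subgroup_integer_group_generator: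
  assumes A: "subgroup A integer_group" and nontriv: "A \<noteq> {0}"
  obtains n where "n > 0" "n \<in> A" "\<And>a. a \<in> A \<Longrightarrow> n dvd a"
proof -
  interpret A: subgroup A integer_group by (fact A)
  have "0 \<in> A" using A.one_closed by simp
  then obtain a where a: "a \<in> A" "a \<noteq> 0" using nontriv by blast
  have neg: "- b \<in> A" if "b \<in> A" for b using A.m_inv_closed[OF that] by simp
  have "\<exists>m::nat. m > 0 \<and> int m \<in> A"
    using a neg[OF a(1)] by (intro exI[of _ "nat \<bar>a\<bar>"]) (auto simp: abs_if)
  define m where "m = (LEAST m::nat. m > 0 \<and> int m \<in> A)"
  have m: "m > 0" "int m \<in> A" using LeastI_ex[OF \<open>\<exists>m. _\<close>] unfolding m_def by auto
  have multiples: "k * int m \<in> A" for k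
    using group.subgroup_int_pow_closed[OF group_integer_group A m(2), of k] by simp
  have "int m dvd b" if b: "b \<in> A" for b
  proof -
    have "b mod int m = b + (- (b div int m) * int m)" by (simp add: minus_div_mult_eq_mod[symmetric])
    also have "\<dots> \<in> A" using A.m_closed[OF b multiples] by (simp del: mult_minus_left)
    finally have r: "b mod int m \<in> A" .
    have "nat (b mod int m) = 0"
    proof (rule ccontr)
      assume "nat (b mod int m) \<noteq> 0"
      moreover have "nat (b mod int m) < m" using m(1) by (simp add: nat_less_iff)
      ultimately show False
        using not_less_Least[of "nat (b mod int m)" "\<lambda>m. m > 0 \<and> int m \<in> A"] r m(1)
        unfolding m_def[symmetric] by simp
    qed
    moreover have "b mod int m \<ge> 0" using m(1) by simp
    ultimately show ?thesis by (simp add: dvd_eq_mod_eq_0)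
  qed
  then show thesis using m by (intro that[of "int m"]) auto
qed

locale integer_extension = group G + N: group N
  for G (structure) and N and j and f and t +
  assumes j_hom: "j \<in> hom N G" and j_inj: "inj_on j (carrier N)"
    and f_hom: "f \<in> hom G integer_group" and j_image: "j ` carrier N = kernel G integer_group f"
    and t: "t \<in> carrier G" and f_t: "f t = 1"
begin

lemma j_in_carrier: "b \<in> carrier N \<Longrightarrow> j b \<in> carrier G"
  using j_hom by (rule hom_in_carrier)

lemma j_mult: "a \<in> carrier N \<Longrightarrow> b \<in> carrier N \<Longrightarrow> j (a \<otimes>\<^bsub>N\<^esub> b) = j a \<otimes> j b"
  using j_hom by (rule hom_mult)

lemma j_eqD: "j a = j b \<Longrightarrow> a \<in> carrier N \<Longrightarrow> b \<in> carrier N \<Longrightarrow> a = b"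
  using j_inj by (auto dest: inj_onD)

lemma f_mult: "p \<in> carrier G \<Longrightarrow> q \<in> carrier G \<Longrightarrow> f (p \<otimes> q) = f p + f q"
  using f_hom by (simp add: hom_mult)

lemma f_j: "b \<in> carrier N \<Longrightarrow> f (j b) = 0"
  using j_image unfolding kernel_def by auto

lemma f_pow: "f (t [^] k) = k" for k :: int
  using hom_int_pow[OF f_hom t is_group group_integer_group, of k] f_t by simp

lemma j_preimage:
  "q \<in> carrier G \<Longrightarrow> f q = 0 \<Longrightarrow>
     inv_into (carrier N) j q \<in> carrier N \<and> j (inv_into (carrier N) j q) = q"
  using j_image unfolding kernel_def by (auto intro: inv_into_into f_inv_into_f)

lemma pow_cancel: "x \<in> carrier G \<Longrightarrow> t [^] (- k) \<otimes> (t [^] k \<otimes> x) = x" for k :: int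
  using t by (simp add: m_assoc[symmetric] int_pow_mult[symmetric])

definition conj_action :: "int \<Rightarrow> 'c \<Rightarrow> 'c" where
  "conj_action k = (\<lambda>b \<in> carrier N. inv_into (carrier N) j (t [^] k \<otimes> j b \<otimes> t [^] (- k)))"

lemma conj_action:
  assumes "b \<in> carrier N"
  shows "conj_action k b \<in> carrier N \<and> j (conj_action k b) = t [^] k \<otimes> j b \<otimes> t [^] (- k)"
proof -
  have "f (t [^] k \<otimes> j b \<otimes> t [^] (- k)) = 0"
    using assms t by (simp add: f_mult f_pow f_j j_in_carrier)
  then show ?thesis
    using j_preimage assms t j_in_carrier unfolding conj_action_def by simp
qed

lemma conj_action_add: "b \<in> carrier N \<Longrightarrow> conj_action k (conj_action l b) = conj_action (k + l) b"
proof -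
  assume b: "b \<in> carrier N"
  have "t [^] (- l) \<otimes> t [^] (- k) = t [^] (- (k + l))"
    using t int_pow_mult[of t "- l" "- k"] by (simp add: add.commute)
  then show ?thesis
    using conj_action[OF b] conj_action[OF conj_action[OF b, THEN conjunct1]] b t j_in_carrier
    by (intro j_eqD) (auto simp: m_assoc int_pow_mult)
qed

lemma conj_action_0: "b \<in> carrier N \<Longrightarrow> conj_action 0 b = b"
  using conj_action j_in_carrier by (intro j_eqD) auto

lemma conj_action_mult:
  "a \<in> carrier N \<Longrightarrow> b \<in> carrier N \<Longrightarrow>
     conj_action k (a \<otimes>\<^bsub>N\<^esub> b) = conj_action k a \<otimes>\<^bsub>N\<^esub> conj_action k b"
  using conj_action t by (intro j_eqD) (auto simp: j_mult j_in_carrier m_assoc pow_cancel)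

lemma conj_action_hom: "conj_action \<in> hom integer_group (AutoGroup N)"
proof -
  have Bij: "conj_action k \<in> Bij (carrier N)" for k
  proof -
    have "bij_betw (conj_action k) (carrier N) (carrier N)"
      by (rule bij_betw_byWitness[where f' = "conj_action (- k)"])
        (auto simp: conj_action conj_action_add conj_action_0)
    then show ?thesis unfolding Bij_def conj_action_def by simp
  qed
  have "conj_action k \<in> auto N" for k
    unfolding auto_def using Bij conj_action conj_action_mult by (auto intro: homI)
  moreover have "compose (carrier N) (conj_action k) (conj_action l) = conj_action (k + l)" for k l
    using conj_action_add by (auto simp: compose_def conj_action_def[of "k + l"])
  ultimately show ?thesis
    using Bij by (intro homI) (auto simp: AutoGroup_def BijGroup_def)
qed

lemma iso_semidirect_product: "G \<cong> semidirect_product N integer_group conj_action"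
proof -
  define \<Psi> where "\<Psi> q = (inv_into (carrier N) j (q \<otimes> t [^] (- f q)), f q)" for q
  have \<Psi>: "inv_into (carrier N) j (q \<otimes> t [^] (- f q)) \<in> carrier N \<and>
      j (inv_into (carrier N) j (q \<otimes> t [^] (- f q))) = q \<otimes> t [^] (- f q)" if "q \<in> carrier G" for q
    using that t by (intro j_preimage) (auto simp: f_mult f_pow)
  have "\<Psi> \<in> hom G (semidirect_product N integer_group conj_action)"
  proof (rule homI)
    fix p q assume p: "p \<in> carrier G" and q: "q \<in> carrier G"
    have "j (fst (\<Psi> p) \<otimes>\<^bsub>N\<^esub> conj_action (f p) (fst (\<Psi> q)))
        = p \<otimes> t [^] (- f p) \<otimes> (t [^] f p \<otimes> (q \<otimes> t [^] (- f q)) \<otimes> t [^] (- f p))"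
      using \<Psi> conj_action p q unfolding \<Psi>_def by (simp add: j_mult)
    also have "\<dots> = p \<otimes> q \<otimes> t [^] (- f (p \<otimes> q))"
      using p q t by (simp add: m_assoc pow_cancel int_pow_mult[symmetric] f_mult add.commute)
    also have "\<dots> = j (fst (\<Psi> (p \<otimes> q)))"
      using \<Psi>[of "p \<otimes> q"] p q unfolding \<Psi>_def by simp
    finally show "\<Psi> (p \<otimes> q) = \<Psi> p \<otimes>\<^bsub>semidirect_product N integer_group conj_action\<^esub> \<Psi> q"
      using \<Psi> conj_action p q \<Psi>[OF m_closed[OF p q]] unfolding \<Psi>_def semidirect_product_def
      by (auto simp: f_mult intro!: j_eqD)
  qed (auto simp: \<Psi>_def semidirect_product_def \<Psi>)
  moreover have "bij_betw \<Psi> (carrier G) (carrier (semidirect_product N integer_group conj_action))"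
  proof (rule bij_betw_byWitness[where f' = "\<lambda>(a, k). j a \<otimes> t [^] k"])
    show "\<forall>q \<in> carrier G. (\<lambda>(a, k). j a \<otimes> t [^] k) (\<Psi> q) = q"
      using \<Psi> t by (simp add: \<Psi>_def m_assoc int_pow_mult[symmetric])
    have "inv_into (carrier N) j (j a \<otimes> t [^] k \<otimes> t [^] (- k)) = a" if "a \<in> carrier N" for a and k :: int
      using j_in_carrier[OF that] t that j_inj by (simp add: m_assoc int_pow_mult[symmetric] inv_into_f_f)
    then show "\<forall>y \<in> carrier (semidirect_product N integer_group conj_action).
        \<Psi> ((\<lambda>(a, k). j a \<otimes> t [^] k) y) = y"
      using j_in_carrier t unfolding \<Psi>_def semidirect_product_def by (auto simp: f_mult f_pow f_j)
  qed (use \<Psi> j_in_carrier t in \<open>auto simp: \<Psi>_def semidirect_product_def\<close>)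
  ultimately show ?thesis by (auto intro: is_isoI isoI)
qed

end

lemma (in group) semidirect_product_iso_of_hom_integer_group:
  assumes N: "group N" and j: "j \<in> hom N G" "inj_on j (carrier N)"
    and f: "f \<in> hom G integer_group" and ker: "j ` carrier N = kernel G integer_group f"
    and nontrivial: "f ` carrier G \<noteq> {0}"
  shows "\<exists>\<phi>. \<phi> \<in> hom integer_group (AutoGroup N) \<and> G \<cong> semidirect_product N integer_group \<phi>"
proof -
  interpret f: group_hom G integer_group f
    using f by (simp add: group_hom_def group_hom_axioms_def is_group)
  obtain n where n: "n > 0" "n \<in> f ` carrier G" and dvd: "\<And>a. a \<in> f ` carrier G \<Longrightarrow> n dvd a"
    using subgroup_integer_group_generator[OF f.img_is_subgroup nontrivial] by blast
  obtain t where t: "t \<in> carrier G" "f t = n" using n(2) by blast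
  define f' where "f' q = f q div n" for q
  have "f' \<in> hom G integer_group"
    by (rule homI) (auto simp: f'_def div_add dvd)
  moreover have "kernel G integer_group f' = kernel G integer_group f"
    using dvd n(1) unfolding kernel_def f'_def by (auto simp: dvd_div_eq_0_iff)
  moreover have "f' t = 1" using t n(1) unfolding f'_def by simp
  ultimately interpret integer_extension G N j f' t
    using N j ker t(1) by (simp add: integer_extension_def integer_extension_axioms_def is_group)
  show ?thesis using conj_action_hom iso_semidirect_product by blast
qed

section \<open>Words, balls and eventual periodicity\<close>

definition word_shift :: "nat \<Rightarrow> (nat \<Rightarrow> nat) \<Rightarrow> (nat \<Rightarrow> nat)" where
  "word_shift n z = (\<lambda>i. z (i + n))"

definition word_prefix :: "nat \<Rightarrow> (nat \<Rightarrow> nat) \<Rightarrow> nat list" where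
  "word_prefix n z = map z [0..<n]"

lemma word_shift_conc [simp]: "word_shift (length w) (conc w y) = y"
  unfolding conc_def word_shift_def by auto

lemma conc_append: "conc (a @ b) y = conc a (conc b y)"
  unfolding conc_def by (rule ext) (auto simp: nth_append)

lemma comp_conc: "\<sigma> \<circ> conc w y = conc (map \<sigma> w) (\<sigma> \<circ> y)"
  unfolding conc_def by auto

lemma fin_words_append [simp]: "a @ b \<in> fin_words d \<longleftrightarrow> a \<in> fin_words d \<and> b \<in> fin_words d"
  unfolding fin_words_def by auto

lemma fin_words_map: "\<sigma> permutes {1..d} \<Longrightarrow> w \<in> fin_words d \<Longrightarrow> map \<sigma> w \<in> fin_words d"
  unfolding fin_words_def using permutes_in_image[of \<sigma> "{1..d}"] by auto

lemma fin_words_Nil [simp]: "[] \<in> fin_words d"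
  unfolding fin_words_def by simp

lemma conc_in_inf_words: "w \<in> fin_words d \<Longrightarrow> y \<in> inf_words d \<Longrightarrow> conc w y \<in> inf_words d"
  unfolding fin_words_def inf_words_def conc_def by (auto dest: nth_mem)

lemma comp_in_inf_words: "\<sigma> permutes {1..d} \<Longrightarrow> y \<in> inf_words d \<Longrightarrow> \<sigma> \<circ> y \<in> inf_words d"
  unfolding inf_words_def using permutes_in_image[of \<sigma> "{1..d}"] by auto

lemma word_shift_in_inf_words: "y \<in> inf_words d \<Longrightarrow> word_shift n y \<in> inf_words d"
  unfolding inf_words_def word_shift_def by auto

lemma word_prefix_in_fin_words: "z \<in> inf_words d \<Longrightarrow> word_prefix n z \<in> fin_words d"
  unfolding word_prefix_def fin_words_def inf_words_def by auto

lemma length_word_prefix [simp]: "length (word_prefix n z) = n"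
  unfolding word_prefix_def by simp

lemma word_prefix_take: "m \<le> n \<Longrightarrow> take m (word_prefix n z) = word_prefix m z"
  unfolding word_prefix_def by (simp add: take_map)

lemma word_ball_subset: "word_ball d w \<subseteq> inf_words d"
  unfolding word_ball_def by auto

lemmas word_ball_inf_words = word_ball_subset[THEN subsetD]

lemma word_ball_Nil [simp]: "word_ball d [] = inf_words d"
  unfolding word_ball_def by simp

lemma conc_in_word_ball: "w \<in> fin_words d \<Longrightarrow> y \<in> inf_words d \<Longrightarrow> conc w y \<in> word_ball d w"
  unfolding word_ball_def using conc_in_inf_words by (auto simp: conc_def)

lemma conc_word_shift: "z \<in> word_ball d w \<Longrightarrow> conc w (word_shift (length w) z) = z"
  unfolding word_ball_def conc_def word_shift_def by auto

lemma word_ball_iff_prefix: "z \<in> word_ball d w \<longleftrightarrow> z \<in> inf_words d \<and> word_prefix (length w) z = w"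
proof -
  have "map z [0..<length w] = w \<longleftrightarrow> (\<forall>i < length w. z i = w ! i)"
    by (metis (no_types, lifting) length_map length_upt minus_nat.diff_0 nth_equalityI nth_map_upt add_0)
  then show ?thesis unfolding word_ball_def word_prefix_def by blast
qed

lemma word_ball_prefix: "word_ball d (word_prefix n z) = {y \<in> inf_words d. \<forall>i < n. y i = z i}"
  unfolding word_ball_def word_prefix_def by auto

lemma in_word_ball_prefix: "z \<in> inf_words d \<Longrightarrow> z \<in> word_ball d (word_prefix n z)"
  unfolding word_ball_prefix by simp

lemma word_ball_prefix_mono: "m \<le> n \<Longrightarrow> word_ball d (word_prefix n z) \<subseteq> word_ball d (word_prefix m z)"
  unfolding word_ball_prefix by auto

lemma word_prefix_add: "word_prefix (m + n) z = word_prefix m z @ word_prefix n (word_shift m z)"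
  unfolding word_prefix_def word_shift_def by (induction n) (auto simp: add.commute)

lemma word_ball_append:
  "z \<in> word_ball d (a @ b) \<longleftrightarrow> z \<in> word_ball d a \<and> word_shift (length a) z \<in> word_ball d b"
  by (auto simp: word_ball_iff_prefix word_prefix_add word_shift_in_inf_words)

lemma word_ball_prefix_disjoint:
  assumes "y \<in> inf_words d" "y \<notin> word_ball d w"
  shows "word_ball d (word_prefix (length w) y) \<inter> word_ball d w = {}"
  using assms by (auto simp: word_ball_iff_prefix)

lemma word_ball_disjoint:
  "i < length a \<Longrightarrow> i < length b \<Longrightarrow> a ! i \<noteq> b ! i \<Longrightarrow> word_ball d a \<inter> word_ball d b = {}"
  unfolding word_ball_def by auto

lemma word_ball_avoiding:
  assumes "y \<in> inf_words d" "y \<notin> word_ball d a" "y \<notin> word_ball d b"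
  shows "word_ball d (word_prefix (max (length a) (length b)) y) \<inter> (word_ball d a \<union> word_ball d b) = {}"
  using word_ball_prefix_disjoint[OF assms(1,2)] word_ball_prefix_disjoint[OF assms(1,3)]
    word_ball_prefix_mono[of "length a" "max (length a) (length b)" d y]
    word_ball_prefix_mono[of "length b" "max (length a) (length b)" d y]
  by auto

lemma eventually_recurrent:
  fixes x :: "nat \<Rightarrow> 'a"
  assumes "finite (range x)"
  obtains N where "\<And>j. j \<ge> N \<Longrightarrow> infinite {i. x i = x j}"
proof -
  define F where "F = (\<Union>a \<in> range x. if finite {i. x i = a} then {i. x i = a} else {})"
  have "finite F" unfolding F_def using assms by (intro finite_UN_I) auto
  then obtain N where N: "F \<subseteq> {..<N}" using finite_nat_bounded by blast
  have "infinite {i. x i = x j}" if "j \<ge> N" for j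
  proof
    assume "finite {i. x i = x j}"
    then have "j \<in> F" unfolding F_def by (intro UN_I[of "x j"]) auto
    then show False using N that by auto
  qed
  then show thesis using that by blast
qed

lemma per_word_in_inf_words:
  assumes "v \<in> fin_words d" "v \<noteq> []"
  shows "per_word v \<in> inf_words d"
proof -
  have "v ! (i mod length v) \<in> set v" for i using assms(2) by simp
  then show ?thesis using assms(1) unfolding per_word_def fin_words_def inf_words_def by blast
qed

lemma per_word_unfold: "v \<noteq> [] \<Longrightarrow> per_word v = conc v (per_word v)"
  unfolding per_word_def conc_def by (auto simp: le_mod_geq)

lemma eventually_periodicI:
  assumes x: "x \<in> inf_words d" and p: "p > 0" and per: "\<And>j. j \<ge> N \<Longrightarrow> x (j + p) = x j"
  shows "eventually_periodic d x"
proof -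
  have per_mult: "x (j + r * p) = x j" if "j \<ge> N" for j r
  proof (induction r)
    case (Suc r)
    have "x (j + Suc r * p) = x ((j + r * p) + p)" by (simp add: algebra_simps)
    also have "\<dots> = x (j + r * p)" using per that by simp
    finally show ?case using Suc by simp
  qed simp
  define u where "u = word_prefix N x"
  define v where "v = map (\<lambda>i. x (N + i)) [0..<p]"
  have "x = conc u (per_word v)"
  proof
    fix i show "x i = conc u (per_word v) i"
    proof (cases "i < N")
      case False
      then have "x i = x (N + (i - N) mod p)"
        using per_mult[of "N + (i - N) mod p" "(i - N) div p"] by simp
      then show ?thesis using False p unfolding conc_def u_def per_word_def v_def by simp
    qed (simp add: conc_def u_def word_prefix_def)
  qed
  moreover have "u \<in> fin_words d" "v \<in> fin_words d" "v \<noteq> []"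
    using x p word_prefix_in_fin_words unfolding u_def v_def fin_words_def inf_words_def by auto
  ultimately show ?thesis unfolding eventually_periodic_def by blast
qed

lemma eventually_periodic_of_forward_shift:
  assumes x: "x \<in> inf_words d" and \<sigma>: "\<sigma> permutes {1..d}" and nm: "n < m"
    and shift: "\<And>k. x (m + k) = \<sigma> (x (n + k))"
  shows "eventually_periodic d x"
proof -
  obtain q where q: "\<sigma> ^^ q = id" "q > 0"
    using permutation_is_nilpotent permutes_imp_permutation[OF _ \<sigma>] by blast
  define t where "t = m - n"
  have iter: "x (n + r * t + k) = (\<sigma> ^^ r) (x (n + k))" for r k
  proof (induction r)
    case (Suc r)
    have "n + Suc r * t + k = (n + t) + (r * t + k)" by simp
    also have "n + t = m" using nm unfolding t_def by simp
    finally have "x (n + Suc r * t + k) = x (m + (r * t + k))" by (rule arg_cong)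
    also have "\<dots> = \<sigma> ((\<sigma> ^^ r) (x (n + k)))" using shift Suc by (simp add: add.assoc)
    finally show ?case by simp
  qed simp
  show ?thesis
  proof (rule eventually_periodicI[OF x, of "q * t" n])
    show "0 < q * t" using q nm unfolding t_def by simp
    fix j assume "n \<le> j"
    then show "x (j + q * t) = x j"
      using iter[of q "j - n"] q(1) by (simp add: algebra_simps)
  qed
qed

lemma eventually_periodic_of_shift:
  assumes x: "x \<in> inf_words d" and \<sigma>: "\<sigma> permutes {1..d}" and nm: "n \<noteq> m"
    and shift: "\<And>k. x (m + k) = \<sigma> (x (n + k))"
  shows "eventually_periodic d x"
proof (cases "n < m")
  case False
  have "x (n + k) = inv' \<sigma> (x (m + k))" for k
    using shift permutes_inverses(2)[OF \<sigma>] by metis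
  moreover have "m < n" using False nm by simp
  ultimately show ?thesis using eventually_periodic_of_forward_shift[OF x permutes_inv[OF \<sigma>]] by blast
qed (use eventually_periodic_of_forward_shift[OF x \<sigma> _ shift] in simp)

section \<open>Local forms\<close>

definition local_form ::
  "nat \<Rightarrow> ((nat \<Rightarrow> nat) \<Rightarrow> (nat \<Rightarrow> nat)) \<Rightarrow> nat list \<Rightarrow> nat list \<Rightarrow> (nat \<Rightarrow> nat) \<Rightarrow> bool" where
  "local_form d g u v \<sigma> \<longleftrightarrow> u \<in> fin_words d \<and> v \<in> fin_words d \<and> \<sigma> permutes {1..d} \<and>
     (\<forall>z \<in> word_ball d u. g z = conc v (\<sigma> \<circ> word_shift (length u) z))"

lemma local_form_apply:
  "local_form d g u v \<sigma> \<Longrightarrow> z \<in> word_ball d u \<Longrightarrow> g z = conc v (\<sigma> \<circ> word_shift (length u) z)"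
  unfolding local_form_def by blast

lemma local_form_maps_to: "local_form d g u v \<sigma> \<Longrightarrow> z \<in> word_ball d u \<Longrightarrow> g z \<in> word_ball d v"
  unfolding local_form_def
  by (metis conc_in_word_ball comp_in_inf_words word_shift_in_inf_words word_ball_inf_words)

lemma local_form_cong:
  "(\<And>z. z \<in> inf_words d \<Longrightarrow> g z = g' z) \<Longrightarrow> local_form d g u v \<sigma> = local_form d g' u v \<sigma>"
  unfolding local_form_def using word_ball_inf_words by metis

lemma local_form_id:
  "w \<in> fin_words d \<Longrightarrow> (\<And>z. z \<in> word_ball d w \<Longrightarrow> g z = z) \<Longrightarrow> local_form d g w w id"
  unfolding local_form_def by (simp add: conc_word_shift permutes_id)

lemma local_form_refine:
  assumes "local_form d g u v \<sigma>" "r \<in> fin_words d"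
  shows "local_form d g (u @ r) (v @ map \<sigma> r) \<sigma>"
  unfolding local_form_def
proof (intro conjI ballI)
  fix z assume z: "z \<in> word_ball d (u @ r)"
  then have zu: "z \<in> word_ball d u" and zr: "word_shift (length u) z \<in> word_ball d r"
    by (auto simp: word_ball_append)
  have "g z = conc v (\<sigma> \<circ> conc r (word_shift (length r) (word_shift (length u) z)))"
    using local_form_apply[OF assms(1) zu] conc_word_shift[OF zr] by simp
  also have "word_shift (length r) (word_shift (length u) z) = word_shift (length (u @ r)) z"
    by (simp add: word_shift_def add_ac)
  finally show "g z = conc (v @ map \<sigma> r) (\<sigma> \<circ> word_shift (length (u @ r)) z)"
    by (simp add: comp_conc conc_append)
qed (use assms in \<open>auto simp: local_form_def fin_words_map\<close>)

lemma local_form_refine_prefix: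
  assumes L: "local_form d g u v \<sigma>" and y: "y \<in> word_ball d u" and n: "length u \<le> n"
  obtains v' where "local_form d g (word_prefix n y) v' \<sigma>" "length v' + length u = length v + n"
proof -
  define r where "r = drop (length u) (word_prefix n y)"
  have pre: "word_prefix n y = u @ r"
    using word_prefix_take[OF n, of y] y unfolding r_def word_ball_iff_prefix
    by (metis append_take_drop_id)
  then have "length r + length u = n" by (metis length_append length_word_prefix add.commute)
  moreover have "r \<in> fin_words d"
    using y word_prefix_in_fin_words[of y d n] pre by (simp add: word_ball_iff_prefix)
  ultimately show thesis
    using local_form_refine[OF L] pre by (intro that[of "v @ map \<sigma> r"]) auto
qed

lemma local_form_comp:
  "local_form d h u w \<tau> \<Longrightarrow> local_form d g w v \<sigma> \<Longrightarrow> local_form d (g \<circ> h) u v (\<sigma> \<circ> \<tau>)"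
  unfolding local_form_def
  by (auto simp: permutes_compose comp_assoc conc_in_word_ball comp_in_inf_words
      word_shift_in_inf_words word_ball_inf_words)

lemma conc_perm_inj:
  assumes d: "d \<ge> 2" and \<sigma>: "\<sigma> permutes {1..d}" and \<sigma>': "\<sigma>' permutes {1..d}"
    and eq: "\<And>y. y \<in> inf_words d \<Longrightarrow> conc a (\<sigma> \<circ> y) = conc b (\<sigma>' \<circ> y)"
  shows "length a = length b \<and> \<sigma> = \<sigma>'"
proof -
  have const: "(\<lambda>_. k) \<in> inf_words d" if "k \<in> {1..d}" for k
    using that unfolding inf_words_def by simp
  have not_less: "\<not> length a < length b"
    if eq: "\<And>y. y \<in> inf_words d \<Longrightarrow> conc a (\<sigma> \<circ> y) = conc b (\<sigma>' \<circ> y)" and \<sigma>: "\<sigma> permutes {1..d}"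
    for a b \<sigma> \<sigma>'
  proof
    assume lt: "length a < length b"
    have "\<sigma> k = b ! length a" if "k \<in> {1..d}" for k
      using fun_cong[OF eq[OF const[OF that]], of "length a"] lt by (simp add: conc_def)
    then have "\<sigma> 1 = \<sigma> 2" using d by simp
    then show False using permutes_inj[OF \<sigma>] by (simp add: inj_eq)
  qed
  have len: "length a = length b"
    using not_less[OF eq \<sigma>] not_less[OF eq[symmetric] \<sigma>'] by simp
  have "\<sigma> k = \<sigma>' k" for k
  proof (cases "k \<in> {1..d}")
    case True
    then show ?thesis using fun_cong[OF eq[OF const[OF True]], of "length a"] len by (simp add: conc_def)
  qed (use \<sigma> \<sigma>' in \<open>simp add: permutes_not_in\<close>)
  then show ?thesis using len by auto
qed

lemma local_form_unique:
  assumes d: "d \<ge> 2" and L1: "local_form d g u1 v1 \<sigma>1" and L2: "local_form d g u2 v2 \<sigma>2"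
    and y1: "y \<in> word_ball d u1" and y2: "y \<in> word_ball d u2"
  shows "int (length u1) - int (length v1) = int (length u2) - int (length v2) \<and> \<sigma>1 = \<sigma>2"
proof -
  define n where "n = length u1 + length u2"
  obtain v1' where L1': "local_form d g (word_prefix n y) v1' \<sigma>1" "length v1' + length u1 = length v1 + n"
    using local_form_refine_prefix[OF L1 y1, of n] n_def by auto
  obtain v2' where L2': "local_form d g (word_prefix n y) v2' \<sigma>2" "length v2' + length u2 = length v2 + n"
    using local_form_refine_prefix[OF L2 y2, of n] n_def by auto
  have "conc v1' (\<sigma>1 \<circ> t) = conc v2' (\<sigma>2 \<circ> t)" if "t \<in> inf_words d" for t
    using local_form_apply[OF L1'(1)] local_form_apply[OF L2'(1)] that
      conc_in_word_ball[OF word_prefix_in_fin_words[OF word_ball_inf_words[OF y1]] that]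
    by (metis length_word_prefix word_shift_conc)
  then have "length v1' = length v2' \<and> \<sigma>1 = \<sigma>2"
    using conc_perm_inj[OF d] L1' L2' unfolding local_form_def by blast
  then show ?thesis using L1'(2) L2'(2) by linarith
qed

lemma local_form_comp_at:
  assumes Lh: "local_form d h u1 v1 \<tau>" and y: "y \<in> word_ball d u1"
    and Lg: "local_form d g u2 v2 \<sigma>" and hy: "h y \<in> word_ball d u2"
  obtains u v where "local_form d (g \<circ> h) u v (\<sigma> \<circ> \<tau>)" "y \<in> word_ball d u"
    "int (length u) - int (length v)
       = (int (length u1) - int (length v1)) + (int (length u2) - int (length v2))"
proof -
  define n where "n = length u1 + length u2"
  obtain w where Lh': "local_form d h (word_prefix n y) w \<tau>" and w: "length w + length u1 = length v1 + n"
    using local_form_refine_prefix[OF Lh y, of n] n_def by auto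
  have yn: "y \<in> word_ball d (word_prefix n y)"
    using y by (simp add: in_word_ball_prefix word_ball_inf_words)
  have hyw: "h y \<in> word_ball d w" using local_form_maps_to[OF Lh' yn] .
  then have "word_prefix (length w) (h y) = w" by (simp add: word_ball_iff_prefix)
  moreover have "length u2 \<le> length w" using w n_def by simp
  ultimately obtain v where Lg': "local_form d g w v \<sigma>" and v: "length v + length u2 = length v2 + length w"
    using local_form_refine_prefix[OF Lg hy] by metis
  show thesis
  proof (rule that)
    show "local_form d (g \<circ> h) (word_prefix n y) v (\<sigma> \<circ> \<tau>)" using local_form_comp[OF Lh' Lg'] .
  qed (use yn w v in auto)
qed

lemma local_form_inv:
  assumes g: "bij_betw g (inf_words d) (inf_words d)" and L: "local_form d g u v \<sigma>"
  shows "local_form d (inv_into (inf_words d) g) v u (inv' \<sigma>)"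
  unfolding local_form_def
proof (intro conjI ballI)
  have \<sigma>: "\<sigma> permutes {1..d}" using L unfolding local_form_def by blast
  show \<sigma>': "inv' \<sigma> permutes {1..d}" using permutes_inv[OF \<sigma>] .
  fix z assume z: "z \<in> word_ball d v"
  define y where "y = conc u (inv' \<sigma> \<circ> word_shift (length v) z)"
  have y: "y \<in> word_ball d u"
    unfolding y_def using L \<sigma>' z
    by (auto simp: local_form_def intro!: conc_in_word_ball comp_in_inf_words word_shift_in_inf_words
        dest: word_ball_inf_words)
  have "g y = conc v (\<sigma> \<circ> (inv' \<sigma> \<circ> word_shift (length v) z))"
    using local_form_apply[OF L y] unfolding y_def by simp
  also have "\<dots> = z" using conc_word_shift[OF z] permutes_inverses(1)[OF \<sigma>] by (simp add: comp_def)
  finally show "inv_into (inf_words d) g z = conc u (inv' \<sigma> \<circ> word_shift (length v) z)"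
    using inv_into_f_f[OF bij_betw_imp_inj_on[OF g] word_ball_inf_words[OF y]] unfolding y_def by simp
qed (use L in \<open>simp_all add: local_form_def\<close>)

section \<open>The group V_d(H)\<close>

lemma permutes_of_subgroup_sym_group: "subgroup H (sym_group d) \<Longrightarrow> \<sigma> \<in> H \<Longrightarrow> \<sigma> permutes {1..d}"
  using subgroup.subset sym_group_carrier by blast

lemma id_in_subgroup_sym_group: "subgroup H (sym_group d) \<Longrightarrow> id \<in> H"
  using subgroup.one_closed sym_group_one by metis

lemma locally_prefix_replacingI:
  assumes "\<And>y. y \<in> inf_words d \<Longrightarrow> \<exists>u v \<sigma>. \<sigma> \<in> H \<and> y \<in> word_ball d u \<and> local_form d g u v \<sigma>"
  shows "locally_prefix_replacing d H g"
  using assms unfolding locally_prefix_replacing_def local_form_def word_shift_def by metis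

lemma locally_prefix_replacingE:
  assumes "subgroup H (sym_group d)" "locally_prefix_replacing d H g" "y \<in> inf_words d"
  obtains u v \<sigma> where "\<sigma> \<in> H" "y \<in> word_ball d u" "local_form d g u v \<sigma>"
  using assms permutes_of_subgroup_sym_group[OF assms(1)]
  unfolding locally_prefix_replacing_def local_form_def word_shift_def by metis

lemma locally_prefix_replacing_cong:
  "(\<And>z. z \<in> inf_words d \<Longrightarrow> g z = g' z) \<Longrightarrow>
     locally_prefix_replacing d H g \<longleftrightarrow> locally_prefix_replacing d H g'"
proof -
  assume "\<And>z. z \<in> inf_words d \<Longrightarrow> g z = g' z"
  then have "(\<forall>z \<in> word_ball d u. g z = f z) \<longleftrightarrow> (\<forall>z \<in> word_ball d u. g' z = f z)" for u f
    using word_ball_inf_words by auto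
  then show ?thesis unfolding locally_prefix_replacing_def by simp
qed

lemma locally_prefix_replacing_cont_words:
  assumes H: "subgroup H (sym_group d)" and g: "locally_prefix_replacing d H g"
  shows "cont_words d g"
  unfolding cont_words_def
proof (intro ballI allI)
  fix y n assume y: "y \<in> inf_words d"
  obtain u v \<sigma> where yu: "y \<in> word_ball d u" and L: "local_form d g u v \<sigma>"
    using locally_prefix_replacingE[OF H g y] by blast
  have "g z i = g y i" if "z \<in> inf_words d" "\<forall>i < length u + n. z i = y i" "i < n" for z i
  proof -
    have "z \<in> word_ball d u" using yu that unfolding word_ball_def by auto
    then show ?thesis
      using that local_form_apply[OF L] yu by (auto simp: conc_def word_shift_def)
  qed
  then show "\<exists>m. \<forall>z \<in> inf_words d. (\<forall>i < m. z i = y i) \<longrightarrow> (\<forall>i < n. g z i = g y i)" by blast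
qed

lemma locally_prefix_replacing_inv:
  assumes H: "subgroup H (sym_group d)" and g: "bij_betw g (inf_words d) (inf_words d)"
    and L: "locally_prefix_replacing d H g"
  shows "locally_prefix_replacing d H (inv_into (inf_words d) g)"
proof (rule locally_prefix_replacingI)
  fix y assume y: "y \<in> inf_words d"
  define z where "z = inv_into (inf_words d) g y"
  have z: "z \<in> inf_words d" "g z = y"
    unfolding z_def using g y by (auto simp: bij_betw_def inv_into_into f_inv_into_f)
  obtain u v \<sigma> where \<sigma>: "\<sigma> \<in> H" and zu: "z \<in> word_ball d u" and L: "local_form d g u v \<sigma>"
    using locally_prefix_replacingE[OF H L z(1)] by blast
  have "inv' \<sigma> \<in> H"
    using subgroup.m_inv_closed[OF H \<sigma>] subgroup.subset[OF H] \<sigma> by (auto simp: sym_group_carrier)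
  moreover have "y \<in> word_ball d v" using local_form_maps_to[OF L zu] z(2) by simp
  ultimately show "\<exists>u v \<sigma>. \<sigma> \<in> H \<and> y \<in> word_ball d u \<and> local_form d (inv_into (inf_words d) g) u v \<sigma>"
    using local_form_inv[OF g L] by blast
qed

lemma locally_prefix_replacing_comp:
  assumes H: "subgroup H (sym_group d)" and h: "h ` inf_words d \<subseteq> inf_words d"
    and Lg: "locally_prefix_replacing d H g" and Lh: "locally_prefix_replacing d H h"
  shows "locally_prefix_replacing d H (g \<circ> h)"
proof (rule locally_prefix_replacingI)
  fix y assume y: "y \<in> inf_words d"
  obtain u1 v1 \<tau> where \<tau>: "\<tau> \<in> H" "y \<in> word_ball d u1" "local_form d h u1 v1 \<tau>"
    using locally_prefix_replacingE[OF H Lh y] by blast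
  have hy: "h y \<in> inf_words d" using h y by blast
  obtain u2 v2 \<sigma> where \<sigma>: "\<sigma> \<in> H" "h y \<in> word_ball d u2" "local_form d g u2 v2 \<sigma>"
    using locally_prefix_replacingE[OF H Lg hy] by blast
  have "\<sigma> \<circ> \<tau> \<in> H" using subgroup.m_closed[OF H \<sigma>(1) \<tau>(1)] by (simp add: sym_group_mult)
  moreover obtain u v where "local_form d (g \<circ> h) u v (\<sigma> \<circ> \<tau>)" "y \<in> word_ball d u"
    using local_form_comp_at[of d h u1 v1 \<tau> y g u2 v2 \<sigma>] \<tau> \<sigma> by blast
  ultimately show "\<exists>u v \<rho>. \<rho> \<in> H \<and> y \<in> word_ball d u \<and> local_form d (g \<circ> h) u v \<rho>"
    by blast
qed

lemma V_carrier_iff: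
  assumes H: "subgroup H (sym_group d)"
  shows "g \<in> V_carrier d H \<longleftrightarrow> g \<in> Bij (inf_words d) \<and> locally_prefix_replacing d H g"
  using locally_prefix_replacing_cont_words[OF H] locally_prefix_replacing_inv[OF H]
  unfolding V_carrier_def homeo_words_def Bij_def by auto

lemma subgroup_V_carrier:
  assumes H: "subgroup H (sym_group d)"
  shows "subgroup (V_carrier d H) (BijGroup (inf_words d))"
proof
  show "V_carrier d H \<subseteq> carrier (BijGroup (inf_words d))"
    using V_carrier_iff[OF H] by (auto simp: BijGroup_def)
next
  fix g h assume "g \<in> V_carrier d H" "h \<in> V_carrier d H"
  then have g: "g \<in> Bij (inf_words d)" "locally_prefix_replacing d H g"
    and h: "h \<in> Bij (inf_words d)" "locally_prefix_replacing d H h"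
    using V_carrier_iff[OF H] by auto
  have "h ` inf_words d \<subseteq> inf_words d" using h(1) unfolding Bij_def bij_betw_def by auto
  then have "locally_prefix_replacing d H (g \<circ> h)"
    using locally_prefix_replacing_comp[OF H _ g(2) h(2)] by blast
  then have "locally_prefix_replacing d H (compose (inf_words d) g h)"
    using locally_prefix_replacing_cong[of d "compose (inf_words d) g h" "g \<circ> h"]
    by (simp add: compose_eq)
  then show "g \<otimes>\<^bsub>BijGroup (inf_words d)\<^esub> h \<in> V_carrier d H"
    using V_carrier_iff[OF H] compose_Bij[OF g(1) h(1)] g(1) h(1) by (simp add: BijGroup_def)
next
  have "local_form d (\<lambda>z \<in> inf_words d. z) [] [] id"
    by (rule local_form_id) auto
  then have "locally_prefix_replacing d H (\<lambda>z \<in> inf_words d. z)"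
    using id_in_subgroup_sym_group[OF H] by (intro locally_prefix_replacingI) force
  then show "\<one>\<^bsub>BijGroup (inf_words d)\<^esub> \<in> V_carrier d H"
    using V_carrier_iff[OF H] id_Bij by (simp add: BijGroup_def)
next
  fix g assume "g \<in> V_carrier d H"
  then have g: "g \<in> Bij (inf_words d)" "locally_prefix_replacing d H g" using V_carrier_iff[OF H] by auto
  then have "locally_prefix_replacing d H (inv_into (inf_words d) g)"
    using locally_prefix_replacing_inv[OF H] unfolding Bij_def by blast
  then have "locally_prefix_replacing d H (\<lambda>z \<in> inf_words d. inv_into (inf_words d) g z)"
    using locally_prefix_replacing_cong[of d "\<lambda>z \<in> inf_words d. inv_into (inf_words d) g z"] by simp
  then show "inv\<^bsub>BijGroup (inf_words d)\<^esub> g \<in> V_carrier d H"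
    using V_carrier_iff[OF H] inv_BijGroup[OF g(1)] restrict_inv_into_Bij[OF g(1)] by simp
qed

lemma group_V_group: "subgroup H (sym_group d) \<Longrightarrow> group (V_group d H)"
  unfolding V_group_def by (rule subgroup.subgroup_is_group[OF subgroup_V_carrier group_BijGroup])

lemma group_stab_group:
  assumes H: "subgroup H (sym_group d)" and x: "x \<in> inf_words d"
  shows "group (stab_group d H x)"
proof -
  interpret V: group "V_group d H" using group_V_group[OF H] .
  have "(\<lambda>g. g) \<in> hom (V_group d H) (BijGroup (inf_words d))"
    using V_carrier_iff[OF H] by (auto simp: V_group_def BijGroup_def intro!: homI)
  then have "group_hom (V_group d H) (BijGroup (inf_words d)) (\<lambda>g. g)"
    using V.is_group group_BijGroup by (simp add: group_hom_def group_hom_axioms_def)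
  then interpret group_action "V_group d H" "inf_words d" "\<lambda>g. g"
    by (simp add: group_action_def)
  have "stabilizer (V_group d H) (\<lambda>g. g) x = {g \<in> V_carrier d H. g x = x}"
    unfolding stabilizer_def V_group_def by simp
  then show ?thesis
    using V.subgroup_imp_group[OF stabilizer_subgroup[OF x]] by (simp add: stab_group_def)
qed

lemma locally_prefix_replacing_off_balls:
  assumes H: "subgroup H (sym_group d)"
    and id: "\<And>z. z \<in> inf_words d \<Longrightarrow> z \<notin> word_ball d a \<Longrightarrow> z \<notin> word_ball d b \<Longrightarrow> g z = z"
    and on_balls: "\<And>y. y \<in> word_ball d a \<union> word_ball d b \<Longrightarrow>
                     \<exists>u v \<sigma>. \<sigma> \<in> H \<and> y \<in> word_ball d u \<and> local_form d g u v \<sigma>"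
  shows "locally_prefix_replacing d H g"
proof (rule locally_prefix_replacingI)
  fix y assume y: "y \<in> inf_words d"
  show "\<exists>u v \<sigma>. \<sigma> \<in> H \<and> y \<in> word_ball d u \<and> local_form d g u v \<sigma>"
  proof (cases "y \<in> word_ball d a \<union> word_ball d b")
    case False
    define w where "w = word_prefix (max (length a) (length b)) y"
    have "local_form d g w w id"
      using word_ball_avoiding[of y d a b] False y id word_ball_inf_words
      unfolding w_def by (intro local_form_id word_prefix_in_fin_words) blast+
    then show ?thesis
      using id_in_subgroup_sym_group[OF H] in_word_ball_prefix[OF y] unfolding w_def by blast
  qed (use on_balls in blast)
qed

definition ball_swap :: "nat \<Rightarrow> nat list \<Rightarrow> nat list \<Rightarrow> (nat \<Rightarrow> nat) \<Rightarrow> (nat \<Rightarrow> nat)" where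
  "ball_swap d a b = (\<lambda>z \<in> inf_words d.
     if z \<in> word_ball d a then conc b (word_shift (length a) z)
     else if z \<in> word_ball d b then conc a (word_shift (length b) z) else z)"

lemma ball_swap_local_form:
  assumes "a \<in> fin_words d" "b \<in> fin_words d" "word_ball d a \<inter> word_ball d b = {}"
  shows "local_form d (ball_swap d a b) a b id" "local_form d (ball_swap d a b) b a id"
  using assms word_ball_inf_words unfolding local_form_def ball_swap_def
  by (auto simp: permutes_id)

lemma ball_swap_in_V_carrier:
  assumes H: "subgroup H (sym_group d)"
    and ab: "a \<in> fin_words d" "b \<in> fin_words d" "word_ball d a \<inter> word_ball d b = {}"
  shows "ball_swap d a b \<in> V_carrier d H"
proof -
  let ?g = "ball_swap d a b"
  note L = ball_swap_local_form[OF ab]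
  have maps: "?g z \<in> word_ball d b" if "z \<in> word_ball d a" for z
    using local_form_maps_to[OF L(1) that] .
  have maps': "?g z \<in> word_ball d a" if "z \<in> word_ball d b" for z
    using local_form_maps_to[OF L(2) that] .
  have off: "?g z = z" if "z \<in> inf_words d" "z \<notin> word_ball d a" "z \<notin> word_ball d b" for z
    using that unfolding ball_swap_def by simp
  have closed: "?g z \<in> inf_words d" if "z \<in> inf_words d" for z
    using maps maps' off that word_ball_inf_words by metis
  have invol: "?g (?g z) = z" if "z \<in> inf_words d" for z
  proof -
    have "?g (?g z) = z" if "z \<in> word_ball d a" "local_form d ?g a b id" "local_form d ?g b a id" for a b
      using local_form_apply[OF that(3) local_form_maps_to[OF that(2,1)]]
        local_form_apply[OF that(2,1)] conc_word_shift[OF that(1)] by simp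
    then show ?thesis using L off[OF that] by (cases "z \<in> word_ball d a"; cases "z \<in> word_ball d b") auto
  qed
  have "bij_betw ?g (inf_words d) (inf_words d)"
    using closed invol by (intro bij_betw_byWitness[where f' = ?g]) auto
  moreover have "locally_prefix_replacing d H ?g"
    using L id_in_subgroup_sym_group[OF H] off by (intro locally_prefix_replacing_off_balls[OF H]) blast+
  ultimately show ?thesis
    using V_carrier_iff[OF H] unfolding Bij_def ball_swap_def by simp
qed

definition ball_twist :: "nat \<Rightarrow> nat list \<Rightarrow> (nat \<Rightarrow> nat) \<Rightarrow> (nat \<Rightarrow> nat) \<Rightarrow> (nat \<Rightarrow> nat)" where
  "ball_twist d w \<sigma> = (\<lambda>z \<in> inf_words d.
     if z \<in> word_ball d w then conc w (\<sigma> \<circ> word_shift (length w) z) else z)"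

lemma ball_twist_local_form:
  "w \<in> fin_words d \<Longrightarrow> \<sigma> permutes {1..d} \<Longrightarrow> local_form d (ball_twist d w \<sigma>) w w \<sigma>"
  using word_ball_inf_words unfolding local_form_def ball_twist_def by auto

lemma ball_twist_comp:
  assumes w: "w \<in> fin_words d" and \<sigma>: "\<sigma> permutes {1..d}" and \<tau>: "\<tau> permutes {1..d}"
    and z: "z \<in> inf_words d"
  shows "ball_twist d w \<sigma> (ball_twist d w \<tau> z) = ball_twist d w (\<sigma> \<circ> \<tau>) z"
proof (cases "z \<in> word_ball d w")
  case True
  then show ?thesis
    using local_form_apply[OF ball_twist_local_form[OF w \<sigma>] local_form_maps_to[OF ball_twist_local_form[OF w \<tau>] True]]
      local_form_apply[OF ball_twist_local_form[OF w \<tau>] True]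
      local_form_apply[OF ball_twist_local_form[OF w permutes_compose[OF \<tau> \<sigma>]] True]
    by (simp add: comp_assoc)
qed (use z in \<open>simp add: ball_twist_def\<close>)

lemma ball_twist_in_V_carrier:
  assumes H: "subgroup H (sym_group d)" and w: "w \<in> fin_words d" and \<sigma>: "\<sigma> \<in> H"
  shows "ball_twist d w \<sigma> \<in> V_carrier d H"
proof -
  have \<sigma>p: "\<sigma> permutes {1..d}" using permutes_of_subgroup_sym_group[OF H \<sigma>] .
  have \<sigma>': "inv' \<sigma> permutes {1..d}" using permutes_inv[OF \<sigma>p] .
  have id_twist: "ball_twist d w id z = z" if "z \<in> inf_words d" for z
    using that conc_word_shift unfolding ball_twist_def by simp
  have closed: "ball_twist d w \<rho> z \<in> inf_words d" if "\<rho> permutes {1..d}" "z \<in> inf_words d" for \<rho> z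
    using that local_form_maps_to[OF ball_twist_local_form[OF w that(1)]] word_ball_inf_words
    unfolding ball_twist_def by (cases "z \<in> word_ball d w") auto
  have "bij_betw (ball_twist d w \<sigma>) (inf_words d) (inf_words d)"
    using closed \<sigma>p \<sigma>' ball_twist_comp[OF w] id_twist permutes_inv_o[OF \<sigma>p]
    by (intro bij_betw_byWitness[where f' = "ball_twist d w (inv' \<sigma>)"]) auto
  moreover have "locally_prefix_replacing d H (ball_twist d w \<sigma>)"
    using ball_twist_local_form[OF w \<sigma>p] \<sigma>
    by (intro locally_prefix_replacing_off_balls[OF H, of w w]) (auto simp: ball_twist_def)
  ultimately show ?thesis
    using V_carrier_iff[OF H] unfolding Bij_def ball_twist_def by simp
qed

lemma V_carrier_block_deletion:
  assumes H: "subgroup H (sym_group d)" and d: "d \<ge> 2"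
    and u: "u \<in> fin_words d" and v: "v \<in> fin_words d" "v \<noteq> []"
  obtains g where "g \<in> V_carrier d H" "local_form d g (u @ v @ v) (u @ v) id"
proof -
  define e where "e = (if v ! 0 = 1 then 2 else 1 :: nat)"
  have e: "[e] \<in> fin_words d" "e \<noteq> v ! 0" using d unfolding e_def fin_words_def by auto
  define a b c where "a = u @ v @ v" and "b = u @ [e]" and "c = u @ v"
  have fin: "a \<in> fin_words d" "b \<in> fin_words d" "c \<in> fin_words d"
    using u v e unfolding a_def b_def c_def by auto
  have disj_ab: "word_ball d a \<inter> word_ball d b = {}"
    by (rule word_ball_disjoint[of "length u"]) (use e v(2) in \<open>auto simp: a_def b_def nth_append\<close>)
  have disj_bc: "word_ball d b \<inter> word_ball d c = {}"
    by (rule word_ball_disjoint[of "length u"]) (use e v(2) in \<open>auto simp: b_def c_def nth_append\<close>)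
  define g where "g = compose (inf_words d) (ball_swap d b c) (ball_swap d a b)"
    \<comment> \<open>u v v y \<mapsto> u e y \<mapsto> u v y\<close>
  have "local_form d g a c id"
    using local_form_comp[OF ball_swap_local_form(1)[OF fin(1,2) disj_ab] ball_swap_local_form(1)[OF fin(2,3) disj_bc]]
      local_form_cong[of d g "ball_swap d b c \<circ> ball_swap d a b"] unfolding g_def
    by (simp add: compose_eq)
  moreover have "g \<in> V_carrier d H"
    using subgroup.m_closed[OF subgroup_V_carrier[OF H] ball_swap_in_V_carrier[OF H fin(2,3) disj_bc]
        ball_swap_in_V_carrier[OF H fin(1,2) disj_ab]]
      ball_swap_in_V_carrier[OF H fin(1,2) disj_ab] ball_swap_in_V_carrier[OF H fin(2,3) disj_bc]
      V_carrier_iff[OF H] unfolding g_def by (simp add: BijGroup_def)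
  ultimately show thesis using that unfolding a_def c_def by blast
qed

section \<open>The germ homomorphism at x\<close>

lemma subgroup_eventual_isotropy:
  assumes H: "subgroup H (sym_group d)"
  shows "subgroup (eventual_isotropy d H x) (sym_group d)"
proof -
  interpret S: group "sym_group d" by (rule sym_group_is_group)
  show ?thesis
  proof (rule S.subgroupI)
    show "eventual_isotropy d H x \<subseteq> carrier (sym_group d)"
      using subgroup.subset[OF H] unfolding eventual_isotropy_def by auto
    show "eventual_isotropy d H x \<noteq> {}"
      using id_in_subgroup_sym_group[OF H] unfolding eventual_isotropy_def by auto
  next
    fix \<sigma> assume "\<sigma> \<in> eventual_isotropy d H x"
    then have \<sigma>: "\<sigma> \<in> H" and fixed: "\<And>a. infinite {i. x i = a} \<Longrightarrow> \<sigma> a = a"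
      unfolding eventual_isotropy_def by auto
    have "inv\<^bsub>sym_group d\<^esub> \<sigma> = inv' \<sigma>" using subgroup.subset[OF H] \<sigma> by auto
    moreover have "inv' \<sigma> a = a" if "infinite {i. x i = a}" for a
      using fixed[OF that] permutes_inverses(2)[OF permutes_of_subgroup_sym_group[OF H \<sigma>], of a] by simp
    ultimately show "inv\<^bsub>sym_group d\<^esub> \<sigma> \<in> eventual_isotropy d H x"
      using subgroup.m_inv_closed[OF H \<sigma>] unfolding eventual_isotropy_def by auto
  next
    fix \<sigma> \<tau> assume "\<sigma> \<in> eventual_isotropy d H x" "\<tau> \<in> eventual_isotropy d H x"
    then show "\<sigma> \<otimes>\<^bsub>sym_group d\<^esub> \<tau> \<in> eventual_isotropy d H x"
      using subgroup.m_closed[OF H] unfolding eventual_isotropy_def by (auto simp: sym_group_mult)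
  qed
qed

lemma group_eventual_isotropy_group:
  "subgroup H (sym_group d) \<Longrightarrow> group (eventual_isotropy_group d H x)"
  unfolding eventual_isotropy_group_def
  by (rule subgroup.subgroup_is_group[OF subgroup_eventual_isotropy sym_group_is_group])

definition has_germ ::
  "nat \<Rightarrow> (nat \<Rightarrow> nat) \<Rightarrow> ((nat \<Rightarrow> nat) \<Rightarrow> (nat \<Rightarrow> nat)) \<Rightarrow> int \<Rightarrow> (nat \<Rightarrow> nat) \<Rightarrow> bool" where
  "has_germ d x g s \<sigma> \<longleftrightarrow>
     (\<exists>u v. local_form d g u v \<sigma> \<and> x \<in> word_ball d u \<and> s = int (length u) - int (length v))"

definition germ :: "nat \<Rightarrow> (nat \<Rightarrow> nat) \<Rightarrow> ((nat \<Rightarrow> nat) \<Rightarrow> (nat \<Rightarrow> nat)) \<Rightarrow> int \<times> (nat \<Rightarrow> nat)" where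
  "germ d x g = (THE p. has_germ d x g (fst p) (snd p))"
  \<comment> \<open>an arbitrary pair unless g has a local form on a ball around x\<close>

lemma has_germ_unique:
  assumes "d \<ge> 2" "has_germ d x g s \<sigma>" "has_germ d x g s' \<sigma>'"
  shows "s = s' \<and> \<sigma> = \<sigma>'"
proof -
  obtain u v where L: "local_form d g u v \<sigma>" "x \<in> word_ball d u"
    and s: "s = int (length u) - int (length v)"
    using assms(2) unfolding has_germ_def by blast
  obtain u' v' where L': "local_form d g u' v' \<sigma>'" "x \<in> word_ball d u'"
    and s': "s' = int (length u') - int (length v')"
    using assms(3) unfolding has_germ_def by blast
  show ?thesis using local_form_unique[OF assms(1) L(1) L'(1) L(2) L'(2)] s s' by simp
qed

lemma germ_eq:
  assumes "d \<ge> 2" "has_germ d x g s \<sigma>"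
  shows "germ d x g = (s, \<sigma>)"
  unfolding germ_def
proof (rule the_equality)
  fix p assume "has_germ d x g (fst p) (snd p)"
  then have "s = fst p \<and> \<sigma> = snd p" by (rule has_germ_unique[OF assms])
  then show "p = (s, \<sigma>)" by (simp add: prod_eq_iff)
qed (use assms(2) in simp)

lemma has_germ_fixed_point:
  assumes "has_germ d x g s \<sigma>" "g x = x"
  obtains n m where "s = int n - int m" "\<And>k. x (m + k) = \<sigma> (x (n + k))"
proof -
  obtain u v where L: "local_form d g u v \<sigma>" and x: "x \<in> word_ball d u"
    and s: "s = int (length u) - int (length v)" using assms(1) unfolding has_germ_def by blast
  have "x = conc v (\<sigma> \<circ> word_shift (length u) x)" using local_form_apply[OF L x] assms(2) by simp
  then have "x (length v + k) = \<sigma> (x (length u + k))" for k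
    by (subst (asm) fun_eq_iff) (simp add: conc_def word_shift_def add.commute)
  then show thesis using s that by blast
qed

locale germ_setting =
  fixes d :: nat and H :: "(nat \<Rightarrow> nat) set" and x :: "nat \<Rightarrow> nat"
  assumes d: "d \<ge> 2" and H: "subgroup H (sym_group d)" and x: "x \<in> inf_words d"
begin

abbreviation "\<Gamma> \<equiv> stab_group d H x"
abbreviation "P \<equiv> integer_group \<times>\<times> sym_group d"

lemma carrier_stab_group: "carrier \<Gamma> = {g \<in> V_carrier d H. g x = x}"
  unfolding stab_group_def by simp

lemma mult_stab_group:
  "g \<in> carrier \<Gamma> \<Longrightarrow> h \<in> carrier \<Gamma> \<Longrightarrow> g \<otimes>\<^bsub>\<Gamma>\<^esub> h = compose (inf_words d) g h"
  using V_carrier_iff[OF H] unfolding stab_group_def V_group_def by (simp add: BijGroup_def)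

lemma has_germ_exists:
  assumes "g \<in> carrier \<Gamma>"
  obtains s \<sigma> where "has_germ d x g s \<sigma>" "\<sigma> \<in> H"
proof -
  have "locally_prefix_replacing d H g" using assms V_carrier_iff[OF H] carrier_stab_group by auto
  then show thesis
    using locally_prefix_replacingE[OF H _ x] that unfolding has_germ_def by metis
qed

lemma has_germ_germ: "g \<in> carrier \<Gamma> \<Longrightarrow> has_germ d x g (fst (germ d x g)) (snd (germ d x g))"
  using has_germ_exists germ_eq[OF d] by (metis fst_conv snd_conv)

lemma snd_germ_in_H: "g \<in> carrier \<Gamma> \<Longrightarrow> snd (germ d x g) \<in> H"
  using has_germ_exists germ_eq[OF d] by (metis snd_conv)

lemma germ_hom: "germ d x \<in> hom \<Gamma> P"
proof (rule homI)
  fix g assume "g \<in> carrier \<Gamma>"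
  then show "germ d x g \<in> carrier P"
    using snd_germ_in_H subgroup.subset[OF H] by (auto simp: carrier_DirProd mem_Times_iff)
next
  fix g h assume g: "g \<in> carrier \<Gamma>" and h: "h \<in> carrier \<Gamma>"
  obtain s \<sigma> where gs: "has_germ d x g s \<sigma>" using has_germ_exists[OF g] by blast
  obtain t \<tau> where ht: "has_germ d x h t \<tau>" using has_germ_exists[OF h] by blast
  obtain u1 v1 where Lh: "local_form d h u1 v1 \<tau>" "x \<in> word_ball d u1" "t = int (length u1) - int (length v1)"
    using ht unfolding has_germ_def by blast
  obtain u2 v2 where Lg: "local_form d g u2 v2 \<sigma>" "x \<in> word_ball d u2" "s = int (length u2) - int (length v2)"
    using gs unfolding has_germ_def by blast
  have hx: "h x = x" using h carrier_stab_group by auto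
  obtain u v where L: "local_form d (g \<circ> h) u v (\<sigma> \<circ> \<tau>)" "x \<in> word_ball d u"
      "int (length u) - int (length v) = t + s"
    using local_form_comp_at[of d h u1 v1 \<tau> x g u2 v2 \<sigma>] Lh Lg hx by auto
  have "local_form d (g \<otimes>\<^bsub>\<Gamma>\<^esub> h) u v (\<sigma> \<circ> \<tau>)"
    using L(1) local_form_cong[of d "g \<otimes>\<^bsub>\<Gamma>\<^esub> h" "g \<circ> h"] mult_stab_group[OF g h]
    by (simp add: compose_eq)
  then have "has_germ d x (g \<otimes>\<^bsub>\<Gamma>\<^esub> h) (s + t) (\<sigma> \<circ> \<tau>)"
    unfolding has_germ_def using L(2,3) by (metis add.commute)
  then show "germ d x (g \<otimes>\<^bsub>\<Gamma>\<^esub> h) = germ d x g \<otimes>\<^bsub>P\<^esub> germ d x h"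
    using germ_eq[OF d] gs ht by (simp add: sym_group_mult)
qed

lemma one_P: "\<one>\<^bsub>P\<^esub> = (0, id)"
  by (simp add: sym_group_one)

lemma kernel_germ: "kernel \<Gamma> P (germ d x) = germ_trivial d H x"
proof (intro equalityI subsetI)
  fix g assume "g \<in> kernel \<Gamma> P (germ d x)"
  then have g: "g \<in> carrier \<Gamma>" and "germ d x g = (0, id)" unfolding kernel_def one_P by auto
  then have "has_germ d x g 0 id" using has_germ_germ by force
  then obtain u v where L: "local_form d g u v id" and xu: "x \<in> word_ball d u"
    and len: "length u = length v" unfolding has_germ_def by auto
  have "x \<in> word_ball d v" using local_form_maps_to[OF L xu] g carrier_stab_group by simp
  then have "v = u" using xu len by (simp add: word_ball_iff_prefix)
  then have "\<forall>z \<in> word_ball d u. g z = z" using local_form_apply[OF L] by (simp add: conc_word_shift)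
  moreover have "open_words d (word_ball d u)"
    unfolding open_words_def using word_ball_subset
    by (auto intro!: exI[of _ "length u"] simp: word_ball_def)
  ultimately show "g \<in> germ_trivial d H x" unfolding germ_trivial_def using g xu by blast
next
  fix g assume "g \<in> germ_trivial d H x"
  then obtain U where g: "g \<in> carrier \<Gamma>" and U: "open_words d U" "x \<in> U" and gU: "\<forall>y \<in> U. g y = y"
    unfolding germ_trivial_def by blast
  obtain n where "\<forall>z \<in> inf_words d. (\<forall>i < n. z i = x i) \<longrightarrow> z \<in> U"
    using U unfolding open_words_def by blast
  then have "word_ball d (word_prefix n x) \<subseteq> U" by (auto simp: word_ball_prefix)
  then have "local_form d g (word_prefix n x) (word_prefix n x) id"
    using gU word_prefix_in_fin_words[OF x] by (intro local_form_id) auto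
  then have "has_germ d x g 0 id" unfolding has_germ_def using in_word_ball_prefix[OF x] by fastforce
  then show "g \<in> kernel \<Gamma> P (germ d x)"
    unfolding kernel_def one_P using g germ_eq[OF d] by auto
qed

definition germ_image :: "(int \<times> (nat \<Rightarrow> nat)) set" where
  "germ_image = germ d x ` carrier \<Gamma>"

lemma group_P: "group P"
  by (simp add: DirProd_group sym_group_is_group)

lemma subgroup_germ_image: "subgroup germ_image P"
  unfolding germ_image_def using group_stab_group[OF H x] group_P germ_hom
  by (intro group_hom.img_is_subgroup) (simp add: group_hom_def group_hom_axioms_def)

lemma germ_group_iso_germ_image: "germ_group d H x \<cong> P\<lparr>carrier := germ_image\<rparr>"
proof -
  have "group_hom \<Gamma> (P\<lparr>carrier := germ_image\<rparr>) (germ d x)"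
    using group_stab_group[OF H x] subgroup.subgroup_is_group[OF subgroup_germ_image group_P] germ_hom
    unfolding germ_image_def by (auto simp: group_hom_def group_hom_axioms_def hom_def)
  moreover have "kernel \<Gamma> (P\<lparr>carrier := germ_image\<rparr>) (germ d x) = germ_trivial d H x"
    using kernel_germ unfolding kernel_def by simp
  ultimately show ?thesis
    using group_hom.FactGroup_iso unfolding germ_group_def germ_image_def by fastforce
qed

lemma germ_image_zero_iff: "(0, \<sigma>) \<in> germ_image \<longleftrightarrow> \<sigma> \<in> eventual_isotropy d H x"
proof
  assume "(0, \<sigma>) \<in> germ_image"
  then obtain g where g: "g \<in> carrier \<Gamma>" and germ_g: "germ d x g = (0, \<sigma>)"
    unfolding germ_image_def by auto
  have \<sigma>: "\<sigma> \<in> H" using snd_germ_in_H[OF g] germ_g by simp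
  have "has_germ d x g 0 \<sigma>" using has_germ_germ[OF g] germ_g by simp
  moreover have "g x = x" using g carrier_stab_group by simp
  ultimately obtain n m where nm: "0 = int n - int m" and shift: "\<And>k. x (m + k) = \<sigma> (x (n + k))"
    by (rule has_germ_fixed_point) blast
  have "\<sigma> a = a" if "infinite {i. x i = a}" for a
  proof -
    have "\<exists>j \<ge> n. x j = a" using that by (simp add: infinite_nat_iff_unbounded_le)
    then obtain j where "j \<ge> n" "x j = a" by blast
    then show ?thesis using shift[of "j - n"] nm by simp
  qed
  then show "\<sigma> \<in> eventual_isotropy d H x" unfolding eventual_isotropy_def using \<sigma> by blast
next
  assume "\<sigma> \<in> eventual_isotropy d H x"
  then have \<sigma>: "\<sigma> \<in> H" and fix_recurrent: "\<And>a. infinite {i. x i = a} \<Longrightarrow> \<sigma> a = a"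
    unfolding eventual_isotropy_def by auto
  have "range x \<subseteq> {1..d}" using x unfolding inf_words_def by auto
  then obtain N where N: "\<And>j. j \<ge> N \<Longrightarrow> infinite {i. x i = x j}"
    using eventually_recurrent finite_subset by blast
  define w where "w = word_prefix N x"
  define g where "g = ball_twist d w \<sigma>"
  have w: "w \<in> fin_words d" "x \<in> word_ball d w"
    unfolding w_def using x by (auto simp: word_prefix_in_fin_words in_word_ball_prefix)
  have L: "local_form d g w w \<sigma>"
    unfolding g_def using ball_twist_local_form[OF w(1) permutes_of_subgroup_sym_group[OF H \<sigma>]] .
  have "\<sigma> \<circ> word_shift N x = word_shift N x"
    using fix_recurrent N by (simp add: fun_eq_iff word_shift_def)
  then have "g x = x"
    using local_form_apply[OF L w(2)] conc_word_shift[OF w(2)] unfolding w_def by simp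
  then have "g \<in> carrier \<Gamma>"
    using ball_twist_in_V_carrier[OF H w(1) \<sigma>] carrier_stab_group unfolding g_def by simp
  moreover have "has_germ d x g 0 \<sigma>" using L w(2) unfolding has_germ_def by auto
  ultimately show "(0, \<sigma>) \<in> germ_image" unfolding germ_image_def using germ_eq[OF d] by force
qed

lemma germ_image_not_eventually_periodic:
  assumes "\<not> eventually_periodic d x" "q \<in> germ_image"
  shows "fst q = 0"
proof (rule ccontr)
  assume q0: "fst q \<noteq> 0"
  obtain g where g: "g \<in> carrier \<Gamma>" and q: "q = germ d x g" using assms(2) unfolding germ_image_def by auto
  have "g x = x" using g carrier_stab_group by simp
  then obtain n m where nm: "fst q = int n - int m" and shift: "\<And>k. x (m + k) = snd q (x (n + k))"
    unfolding q by (rule has_germ_fixed_point[OF has_germ_germ[OF g]]) blast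
  have "snd q permutes {1..d}" using snd_germ_in_H[OF g] q permutes_of_subgroup_sym_group[OF H] by simp
  moreover have "n \<noteq> m" using q0 nm by auto
  ultimately show False using eventually_periodic_of_shift[OF x _ _ shift] assms(1) by blast
qed

lemma germ_image_eventually_periodic:
  assumes "eventually_periodic d x"
  shows "\<exists>q \<in> germ_image. fst q \<noteq> 0"
proof -
  obtain u v where u: "u \<in> fin_words d" and v: "v \<in> fin_words d" "v \<noteq> []"
    and xuv: "x = conc u (per_word v)" using assms unfolding eventually_periodic_def by blast
  obtain g where g: "g \<in> V_carrier d H" and L: "local_form d g (u @ v @ v) (u @ v) id"
    using V_carrier_block_deletion[OF H d u v] by blast
  have xc: "x = conc (u @ v) (per_word v)"
    unfolding xuv conc_append by (subst per_word_unfold[OF v(2)]) (rule refl)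
  have xa: "x = conc (u @ v @ v) (per_word v)"
    by (subst xc, unfold conc_append, subst per_word_unfold[OF v(2)]) (rule refl)
  have xa_ball: "x \<in> word_ball d (u @ v @ v)"
    using conc_in_word_ball[OF _ per_word_in_inf_words[OF v]] u v xa by simp
  have "g x = conc (u @ v) (id \<circ> word_shift (length (u @ v @ v)) x)"
    using local_form_apply[OF L xa_ball] .
  also have "word_shift (length (u @ v @ v)) x = per_word v"
    using word_shift_conc[of "u @ v @ v" "per_word v"] xa by simp
  finally have "g \<in> carrier \<Gamma>" using xc g carrier_stab_group by simp
  moreover have "has_germ d x g (int (length v)) id"
    unfolding has_germ_def using L xa_ball by (intro exI[of _ "u @ v @ v"] exI[of _ "u @ v"]) simp
  ultimately show ?thesis using v(2) germ_eq[OF d] unfolding germ_image_def by force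
qed

abbreviation "E \<equiv> P\<lparr>carrier := germ_image\<rparr>"

lemma group_germ_image: "group E"
  using subgroup.subgroup_is_group[OF subgroup_germ_image group_P] .

lemma fst_hom_germ_image: "fst \<in> hom E integer_group"
  by (rule homI) auto

lemma isotropy_embedding:
  "(\<lambda>\<sigma>. (0, \<sigma>)) \<in> hom (eventual_isotropy_group d H x) E"
  "inj_on (\<lambda>\<sigma>. (0, \<sigma>)) (carrier (eventual_isotropy_group d H x))"
  "(\<lambda>\<sigma>. (0, \<sigma>)) ` carrier (eventual_isotropy_group d H x) = kernel E integer_group fst"
proof -
  have "(0, \<sigma>) \<in> germ_image" if "\<sigma> \<in> eventual_isotropy d H x" for \<sigma>
    using germ_image_zero_iff that by blast
  then show "(\<lambda>\<sigma>. (0, \<sigma>)) \<in> hom (eventual_isotropy_group d H x) E"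
    by (intro homI) (auto simp: eventual_isotropy_group_def sym_group_mult)
  show "inj_on (\<lambda>\<sigma>. (0, \<sigma>)) (carrier (eventual_isotropy_group d H x))"
    by (simp add: inj_on_def)
  show "(\<lambda>\<sigma>. (0, \<sigma>)) ` carrier (eventual_isotropy_group d H x) = kernel E integer_group fst"
    using germ_image_zero_iff unfolding kernel_def eventual_isotropy_group_def
    by (auto simp: image_iff)
qed

lemma germ_image_iso_not_eventually_periodic:
  assumes "\<not> eventually_periodic d x"
  shows "E \<cong> eventual_isotropy_group d H x"
proof -
  have "kernel E integer_group fst = germ_image"
    using germ_image_not_eventually_periodic[OF assms] unfolding kernel_def by auto
  then have "(\<lambda>\<sigma>. (0, \<sigma>)) \<in> iso (eventual_isotropy_group d H x) E"
    using isotropy_embedding by (auto simp: iso_def bij_betw_def)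
  then show ?thesis
    using group.iso_sym[OF group_eventual_isotropy_group[OF H]] is_isoI by blast
qed

lemma germ_image_iso_eventually_periodic:
  assumes "eventually_periodic d x"
  shows "\<exists>\<phi>. \<phi> \<in> hom integer_group (AutoGroup (eventual_isotropy_group d H x)) \<and>
           E \<cong> semidirect_product (eventual_isotropy_group d H x) integer_group \<phi>"
proof -
  interpret E: group E by (rule group_germ_image)
  obtain q where q: "q \<in> germ_image" "fst q \<noteq> 0"
    using germ_image_eventually_periodic[OF assms] by blast
  then have "fst q \<in> fst ` carrier E" by simp
  then have "fst ` carrier E \<noteq> {0}" using q(2) by blast
  then show ?thesis
    using E.semidirect_product_iso_of_hom_integer_group[OF group_eventual_isotropy_group[OF H]
        isotropy_embedding(1,2) fst_hom_germ_image isotropy_embedding(3)]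
    by blast
qed

end

theorem corollary7p16:
  fixes d :: nat and H :: "(nat \<Rightarrow> nat) set" and x :: "nat \<Rightarrow> nat"
  assumes "d \<ge> 2"
    and "subgroup H (sym_group d)"
    and "x \<in> inf_words d"
  shows "(\<not> eventually_periodic d x \<longrightarrow>
            germ_group d H x \<cong> eventual_isotropy_group d H x)
       \<and> (eventually_periodic d x \<longrightarrow>
            (\<exists>\<phi>. \<phi> \<in> hom integer_group (AutoGroup (eventual_isotropy_group d H x)) \<and>
                 germ_group d H x \<cong>
                   semidirect_product (eventual_isotropy_group d H x) integer_group \<phi>))"
proof -
  interpret germ_setting d H x using assms by (rule germ_setting.intro)
  show ?thesis
  proof (intro conjI impI)
    assume "\<not> eventually_periodic d x"
    then show "germ_group d H x \<cong> eventual_isotropy_group d H x"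
      by (rule iso_trans[OF germ_group_iso_germ_image germ_image_iso_not_eventually_periodic])
  next
    assume "eventually_periodic d x"
    then obtain \<phi> where "\<phi> \<in> hom integer_group (AutoGroup (eventual_isotropy_group d H x))"
      and "E \<cong> semidirect_product (eventual_isotropy_group d H x) integer_group \<phi>"
      using germ_image_iso_eventually_periodic by blast
    then show "\<exists>\<phi>. \<phi> \<in> hom integer_group (AutoGroup (eventual_isotropy_group d H x)) \<and>
        germ_group d H x \<cong> semidirect_product (eventual_isotropy_group d H x) integer_group \<phi>"
      using iso_trans[OF germ_group_iso_germ_image] by blast
  qed
qed

end
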